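(* Let $\alpha\ge1$. There is a constant $C$ (depending on $\alpha$) such that the following holds. Let $N\ge2$, $k\in\{1,\dots,N-1\}$ and let $x,y\in\Omega_N$ with $x\le y$ coordinatewise and with $x_{k+1}>x_{k-1}$, $y_{k+1}>y_{k-1}$. Let $I^x=[x_{k-1},x_{k+1}]$, $I^y=[y_{k-1},y_{k+1}]$, $\nabla x_k=x_{k+1}-x_{k-1}$, $\nabla y_k=y_{k+1}-y_{k-1}$, $\delta\bar X_k=\frac{(y_{k-1}+y_{k+1})-(x_{k-1}+x_{k+1})}{2}$, and $$q=\|\mathrm{Beta}_\alpha(I^x)-\mathrm{Beta}_\alpha(I^y)\|_{TV},\qquad Q=\min\left(\frac{\delta\bar X_k}{\max(\nabla x_k,\nabla y_k)},1\right).$$ Then $C^{-1}Q\le q\le CQ$. Furthermore, there exists a constant $c_1>0$ (depending only on $\alpha$) such that $q\ge1-c_1$ implies $\max(|I^x|,|I^y|)\ge2|I^x\cap I^y|$.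
   Context: $\Omega_N=\{x\in\mathbb{R}^{N-1}:0\le x_1\le\dots\le x_{N-1}\le N\}$ with $x_0=0,x_N=N$. For an interval $I=[a,b]$ with $a<b$, $\mathrm{Beta}_\alpha(I)$ is the law with density $\frac{\Gamma(2\alpha)(u-a)^{\alpha-1}(b-u)^{\alpha-1}}{\Gamma(\alpha)^2(b-a)^{2\alpha-1}}\mathbf{1}_{[a,b]}(u)$. $|J|$ denotes the length of an interval $J$. *)

theory Defs
  imports "HOL-Probability.Probability"
begin

text \<open>Configuration space Omega_N: a point is a function x :: nat => real whose
  relevant coordinates are x 0 = 0, x 1, ..., x (N-1), x N = N (nondecreasing).\<close>
definition Omega :: "nat \<Rightarrow> (nat \<Rightarrow> real) \<Rightarrow> bool" where
  "Omega N x \<longleftrightarrow> x 0 = 0 \<and> x N = real N \<and> (\<forall>i<N. x i \<le> x (Suc i))"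

definition beta_density :: "real \<Rightarrow> real \<Rightarrow> real \<Rightarrow> real \<Rightarrow> real" where
  "beta_density \<alpha> a b u =
     (if a \<le> u \<and> u \<le> b then
        Gamma (2*\<alpha>) * (u - a) powr (\<alpha> - 1) * (b - u) powr (\<alpha> - 1)
          / (Gamma \<alpha> ^ 2 * (b - a) powr (2*\<alpha> - 1))
      else 0)"

definition Beta_law :: "real \<Rightarrow> real \<Rightarrow> real \<Rightarrow> real measure" where
  "Beta_law \<alpha> a b = density lborel (\<lambda>u. ennreal (beta_density \<alpha> a b u))"

definition tv_dist :: "real measure \<Rightarrow> real measure \<Rightarrow> real" where
  "tv_dist \<mu> \<nu> = (SUP A \<in> sets borel. \<bar>measure \<mu> A - measure \<nu> A\<bar>)"

definition len :: "real set \<Rightarrow> real" where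
  "len J = measure lborel J"

end

(* Both laws are affine images of one standard Beta law. Upper bound: with L the longer of the
   two lengths, ((b-c)/L)^(2 alpha - 1) times the Beta density of the overlap [c,b] lies below both
   densities, so the total variation is at most 1 - ((b-c)/L)^(2 alpha - 1), which is O(Q) by
   Bernoulli's inequality. Lower bound: both laws give the same mass to the half-line below their
   midpoints; at the midpoint of [c,d] the law on [a,b] has in addition the mass between the two
   midpoints, where (inside the middle half of [a,b]) its density is at least a constant over b - a.
   The overlap bound also gives the second claim, with c1 = 2^(1 - 2 alpha). *)

theory Submission
  imports Defs
begin

definition beta_const :: "real \<Rightarrow> real" where
  "beta_const \<alpha> = Gamma (2*\<alpha>) / Gamma \<alpha> ^ 2"

lemma beta_const_pos:
  assumes "\<alpha> > 0"
  shows "beta_const \<alpha> > 0"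
proof -
  have "Gamma \<alpha> > 0" "Gamma (2*\<alpha>) > 0" using assms by auto
  then show ?thesis unfolding beta_const_def by simp
qed

lemma beta_const_mult_Beta:
  assumes "\<alpha> > 0"
  shows "beta_const \<alpha> * Beta \<alpha> \<alpha> = 1"
proof -
  have "Gamma \<alpha> > 0" "Gamma (2*\<alpha>) > 0" using assms by auto
  moreover have "Beta \<alpha> \<alpha> = Gamma \<alpha> ^ 2 / Gamma (2*\<alpha>)"
    unfolding Beta_def power2_eq_square mult_2 by (rule refl)
  ultimately show ?thesis unfolding beta_const_def by simp
qed

lemma beta_density_eq:
  assumes "a \<le> u" "u \<le> b"
  shows "beta_density \<alpha> a b u =
     beta_const \<alpha> * ((u-a) powr (\<alpha>-1) * (b-u) powr (\<alpha>-1)) / (b-a) powr (2*\<alpha>-1)"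
proof -
  have "beta_density \<alpha> a b u = Gamma (2*\<alpha>) * (u-a) powr (\<alpha>-1) * (b-u) powr (\<alpha>-1)
      / (Gamma \<alpha> ^ 2 * (b-a) powr (2*\<alpha>-1))"
    unfolding beta_density_def by (rule if_P) (use assms in simp)
  also have "\<dots> = beta_const \<alpha> * ((u-a) powr (\<alpha>-1) * (b-u) powr (\<alpha>-1)) / (b-a) powr (2*\<alpha>-1)"
    unfolding beta_const_def by simp
  finally show ?thesis .
qed

lemma beta_density_eq_0: "\<not> (a \<le> u \<and> u \<le> b) \<Longrightarrow> beta_density \<alpha> a b u = 0"
  unfolding beta_density_def by (rule if_not_P)

lemma beta_density_nonneg:
  assumes "\<alpha> > 0"
  shows "beta_density \<alpha> a b u \<ge> 0"
proof -
  have "Gamma (2*\<alpha>) > 0" using assms by auto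
  then show ?thesis unfolding beta_density_def by auto
qed

lemma borel_measurable_beta_density [measurable]:
  "beta_density \<alpha> a b \<in> borel_measurable borel"
  unfolding beta_density_def by measurable

lemma beta_density_std:
  "0 \<le> t \<Longrightarrow> t \<le> 1 \<Longrightarrow> beta_density \<alpha> 0 1 t = beta_const \<alpha> * (t powr (\<alpha>-1) * (1-t) powr (\<alpha>-1))"
  by (simp add: beta_density_eq)

lemma beta_density_affine:
  assumes "a < b"
  shows "beta_density \<alpha> a b u = beta_density \<alpha> 0 1 ((u-a)/(b-a)) / (b-a)"
proof (cases "a \<le> u \<and> u \<le> b")
  case True
  define t where "t = (u-a)/(b-a)"
  have t: "0 \<le> t" "t \<le> 1" "1 - t = (b-u)/(b-a)"
    using True assms by (simp_all add: t_def field_simps)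
  have split: "(b-a) powr (2*\<alpha>-1) = (b-a) powr (\<alpha>-1) * (b-a) powr (\<alpha>-1) * (b-a)"
  proof -
    have "(b-a) powr (2*\<alpha>-1) = (b-a) powr ((\<alpha>-1) + (\<alpha>-1) + 1)" by simp
    then show ?thesis using assms by (simp only: powr_add) simp
  qed
  have "beta_density \<alpha> 0 1 t / (b-a) = beta_const \<alpha> *
      ((u-a) powr (\<alpha>-1) / (b-a) powr (\<alpha>-1) * ((b-u) powr (\<alpha>-1) / (b-a) powr (\<alpha>-1))) / (b-a)"
    using t True by (simp add: beta_density_std t_def powr_divide)
  also have "\<dots> = beta_const \<alpha> * ((u-a) powr (\<alpha>-1) * (b-u) powr (\<alpha>-1)) / (b-a) powr (2*\<alpha>-1)"
    unfolding split by simp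
  also have "\<dots> = beta_density \<alpha> a b u"
    using True by (simp add: beta_density_eq)
  finally show ?thesis unfolding t_def ..
next
  case False
  then have "\<not> (0 \<le> (u-a)/(b-a) \<and> (u-a)/(b-a) \<le> 1)" using assms by (auto simp: field_simps)
  then show ?thesis using False by (simp add: beta_density_eq_0)
qed

definition beta_cdf :: "real \<Rightarrow> real \<Rightarrow> real" where
  "beta_cdf \<alpha> s = integral {0..s} (beta_density \<alpha> 0 1)"

lemma has_integral_beta_density_std:
  assumes "\<alpha> > 0"
  shows "(beta_density \<alpha> 0 1 has_integral 1) {0..1}"
proof -
  have "((\<lambda>t. beta_const \<alpha> * (t powr (\<alpha>-1) * (1-t) powr (\<alpha>-1))) has_integral beta_const \<alpha> * Beta \<alpha> \<alpha>) {0..1}"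
    by (rule has_integral_mult_right) (rule has_integral_Beta_real[OF assms assms])
  then have "((\<lambda>t. beta_const \<alpha> * (t powr (\<alpha>-1) * (1-t) powr (\<alpha>-1))) has_integral 1) {0..1}"
    by (simp add: beta_const_mult_Beta[OF assms])
  then show ?thesis by (rule has_integral_eq[rotated]) (simp add: beta_density_std)
qed

lemma beta_cdf_1: "\<alpha> > 0 \<Longrightarrow> beta_cdf \<alpha> 1 = 1"
  unfolding beta_cdf_def by (rule integral_unique[OF has_integral_beta_density_std])

lemma has_integral_beta_density:
  assumes "\<alpha> > 0" "a < b" "0 \<le> s" "s \<le> 1"
  shows "(beta_density \<alpha> a b has_integral beta_cdf \<alpha> s) {a..a+s*(b-a)}"
proof -
  define m where "m = 1/(b-a)"
  define c where "c = -a/(b-a)"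
  have "beta_density \<alpha> 0 1 integrable_on {0..1}"
    using has_integral_beta_density_std[OF assms(1)] by blast
  then have "beta_density \<alpha> 0 1 integrable_on {0..s}"
    by (rule integrable_subinterval_real) (use assms in auto)
  then have std: "(beta_density \<alpha> 0 1 has_integral beta_cdf \<alpha> s) (cbox 0 s)"
    unfolding beta_cdf_def cbox_interval by (rule integrable_integral)
  have "m > 0" using assms by (simp add: m_def)
  note affine = has_integral_affinity'[OF std this, where c = c]
  have ends: "(0 - c) /\<^sub>R m = a" "(s - c) /\<^sub>R m = a + s*(b-a)"
    and scale: "beta_cdf \<alpha> s /\<^sub>R m ^ DIM(real) = (b-a) * beta_cdf \<alpha> s"
    using assms by (simp_all add: m_def c_def field_simps)
  have arg: "m *\<^sub>R u + c = (u-a)/(b-a)" for u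
    by (simp add: m_def c_def diff_divide_distrib)
  have "((\<lambda>u. beta_density \<alpha> 0 1 ((u-a)/(b-a))) has_integral (b-a) * beta_cdf \<alpha> s) {a..a+s*(b-a)}"
    using affine unfolding cbox_interval ends scale arg .
  from has_integral_divide[OF this, of "b-a"] show ?thesis
    using assms by (simp add: beta_density_affine[symmetric])
qed

lemma sets_Beta_law [simp, measurable_cong]: "sets (Beta_law \<alpha> a b) = sets borel"
  unfolding Beta_law_def by simp

lemma space_Beta_law [simp]: "space (Beta_law \<alpha> a b) = UNIV"
  unfolding Beta_law_def by simp

lemma emeasure_Beta_law:
  "A \<in> sets borel \<Longrightarrow>
     emeasure (Beta_law \<alpha> a b) A = (\<integral>\<^sup>+u. ennreal (beta_density \<alpha> a b u) * indicator A u \<partial>lborel)"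
  unfolding Beta_law_def by (rule emeasure_density) auto

lemma emeasure_Beta_law_atMost:
  assumes "\<alpha> > 0" "a < b" "0 \<le> s" "s \<le> 1"
  shows "emeasure (Beta_law \<alpha> a b) {..a+s*(b-a)} = ennreal (beta_cdf \<alpha> s)"
proof -
  have "emeasure (Beta_law \<alpha> a b) {..a+s*(b-a)} =
      (\<integral>\<^sup>+u. ennreal (beta_density \<alpha> a b u) * indicator {a..a+s*(b-a)} u \<partial>lborel)"
    by (subst emeasure_Beta_law) (auto intro!: nn_integral_cong simp: indicator_def beta_density_eq_0)
  also have "\<dots> = ennreal (beta_cdf \<alpha> s)"
    by (rule nn_integral_has_integral_lebesgue'[OF _ has_integral_beta_density[OF assms]])
       (simp add: beta_density_nonneg assms(1))
  finally show ?thesis .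
qed

lemma prob_space_Beta_law:
  assumes "\<alpha> > 0" "a < b"
  shows "prob_space (Beta_law \<alpha> a b)"
proof (rule prob_spaceI)
  have "emeasure (Beta_law \<alpha> a b) UNIV = emeasure (Beta_law \<alpha> a b) {..a+1*(b-a)}"
    by (subst (1 2) emeasure_Beta_law) (auto intro!: nn_integral_cong simp: indicator_def beta_density_eq_0)
  then show "emeasure (Beta_law \<alpha> a b) (space (Beta_law \<alpha> a b)) = 1"
    using emeasure_Beta_law_atMost[OF assms, of 1] beta_cdf_1[OF assms(1)] by simp
qed

lemma measure_Beta_law_below_midpoint:
  assumes "\<alpha> > 0" "a < b" "c < d"
  shows "measure (Beta_law \<alpha> a b) {..(a+b)/2} = measure (Beta_law \<alpha> c d) {..(c+d)/2}"
proof -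
  have "a + 1/2*(b-a) = (a+b)/2" "c + 1/2*(d-c) = (c+d)/2" by (simp_all add: field_simps)
  then show ?thesis
    using emeasure_Beta_law_atMost[OF assms(1,2), of "1/2"] emeasure_Beta_law_atMost[OF assms(1,3), of "1/2"]
    by (simp only:) (simp add: measure_def)
qed

lemma abs_measure_diff_le_1:
  assumes "prob_space M" "prob_space N"
  shows "\<bar>measure M A - measure N A\<bar> \<le> 1"
  using prob_space.prob_le_1[OF assms(1), of A] prob_space.prob_le_1[OF assms(2), of A]
    measure_nonneg[of M A] measure_nonneg[of N A]
  unfolding abs_le_iff by linarith

lemma tv_dist_le:
  assumes "\<And>A. A \<in> sets borel \<Longrightarrow> \<bar>measure M A - measure N A\<bar> \<le> B"
  shows "tv_dist M N \<le> B"
  unfolding tv_dist_def by (rule cSUP_least) (use assms in auto)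

lemma abs_measure_diff_le_tv_dist:
  assumes "prob_space M" "prob_space N" "A \<in> sets borel"
  shows "\<bar>measure M A - measure N A\<bar> \<le> tv_dist M N"
  unfolding tv_dist_def
  by (rule cSUP_upper[OF assms(3)])
     (use abs_measure_diff_le_1[OF assms(1,2)] in \<open>auto intro: bdd_aboveI[of _ 1]\<close>)

lemma tv_dist_le_common_part:
  assumes M: "prob_space M" "sets M = sets borel" and N: "prob_space N" "sets N = sets borel"
    and H: "sets H = sets borel"
    and HM: "\<And>A. A \<in> sets borel \<Longrightarrow> emeasure H A \<le> emeasure M A"
    and HN: "\<And>A. A \<in> sets borel \<Longrightarrow> emeasure H A \<le> emeasure N A"
  shows "tv_dist M N \<le> 1 - measure H UNIV"
proof -
  interpret M: prob_space M by (fact M(1))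
  interpret N: prob_space N by (fact N(1))
  have spaces: "space M = UNIV" "space N = UNIV" "space H = UNIV"
    using M(2) N(2) H by (auto dest: sets_eq_imp_space_eq)
  have "emeasure H UNIV \<le> 1" using HM[of UNIV] M.emeasure_space_1 spaces by simp
  then interpret H: finite_measure H by (intro finite_measureI) (auto simp: spaces top_unique)
  have le: "measure H A \<le> measure M A" "measure H A \<le> measure N A" if "A \<in> sets borel" for A
    using HM[OF that] HN[OF that]
    by (simp_all add: H.emeasure_eq_measure M.emeasure_eq_measure N.emeasure_eq_measure)
  show ?thesis
  proof (rule tv_dist_le)
    fix A :: "real set" assume A: "A \<in> sets borel"
    \<comment> \<open>M A - N A \<le> (1 - H (UNIV - A)) - H A, and symmetrically.\<close>
    have "measure H (UNIV - A) = measure H UNIV - measure H A"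
      using H.finite_measure_compl[of A] A H spaces by simp
    moreover have "measure M (UNIV - A) = 1 - measure M A" "measure N (UNIV - A) = 1 - measure N A"
      using M.prob_compl[of A] N.prob_compl[of A] A M(2) N(2) spaces by simp_all
    ultimately show "\<bar>measure M A - measure N A\<bar> \<le> 1 - measure H UNIV"
      using le[OF A] le[of "UNIV - A"] A by (auto simp: abs_le_iff)
  qed
qed

lemma beta_density_subinterval_le:
  assumes "\<alpha> \<ge> 1" "a \<le> c" "c < b" "b \<le> d"
  shows "((b-c)/(d-a)) powr (2*\<alpha>-1) * beta_density \<alpha> c b u \<le> beta_density \<alpha> a d u"
proof (cases "c \<le> u \<and> u \<le> b")
  case True
  have "(u-c) powr (\<alpha>-1) * (b-u) powr (\<alpha>-1) \<le> (u-a) powr (\<alpha>-1) * (d-u) powr (\<alpha>-1)"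
    using assms True by (intro mult_mono powr_mono2) auto
  then have "beta_const \<alpha> * ((u-c) powr (\<alpha>-1) * (b-u) powr (\<alpha>-1)) / (d-a) powr (2*\<alpha>-1)
      \<le> beta_const \<alpha> * ((u-a) powr (\<alpha>-1) * (d-u) powr (\<alpha>-1)) / (d-a) powr (2*\<alpha>-1)"
    using beta_const_pos[of \<alpha>] assms by (intro divide_right_mono mult_left_mono) auto
  moreover have "((b-c)/(d-a)) powr (2*\<alpha>-1) * beta_density \<alpha> c b u
      = beta_const \<alpha> * ((u-c) powr (\<alpha>-1) * (b-u) powr (\<alpha>-1)) / (d-a) powr (2*\<alpha>-1)"
    using True assms by (simp add: beta_density_eq powr_divide)
  ultimately show ?thesis using True assms by (simp add: beta_density_eq)
next
  case False
  then show ?thesis using assms by (simp add: beta_density_eq_0 beta_density_nonneg)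
qed

lemma emeasure_scaled_Beta_law_le:
  assumes "\<alpha> \<ge> 1" "a \<le> c" "c < b" "b \<le> d" "0 \<le> s" "s \<le> ((b-c)/(d-a)) powr (2*\<alpha>-1)"
    and "A \<in> sets borel"
  shows "emeasure (density lborel (\<lambda>u. ennreal (s * beta_density \<alpha> c b u))) A \<le> emeasure (Beta_law \<alpha> a d) A"
proof -
  have "s * beta_density \<alpha> c b u \<le> beta_density \<alpha> a d u" for u
    using mult_right_mono[OF assms(6) beta_density_nonneg[of \<alpha> c b u]] assms
      beta_density_subinterval_le[OF assms(1-4), of u]
    by simp
  then show ?thesis
    using assms(7)
    by (simp add: emeasure_density emeasure_Beta_law nn_integral_mono mult_right_mono ennreal_leI)
qed

lemma tv_dist_Beta_law_le_overlap:
  assumes "\<alpha> \<ge> 1" "a < b" "c < d" "a \<le> c" "b \<le> d" "c < b"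
  shows "tv_dist (Beta_law \<alpha> a b) (Beta_law \<alpha> c d) \<le> 1 - ((b-c) / max (b-a) (d-c)) powr (2*\<alpha>-1)"
proof -
  define s where "s = ((b-c) / max (b-a) (d-c)) powr (2*\<alpha>-1)"
  define H where "H = density lborel (\<lambda>u. ennreal (s * beta_density \<alpha> c b u))"
  have s: "0 \<le> s" "s \<le> ((b-c)/(b-a)) powr (2*\<alpha>-1)" "s \<le> ((b-c)/(d-c)) powr (2*\<alpha>-1)"
    unfolding s_def using assms by (auto intro!: powr_mono2 divide_left_mono)
  have "emeasure H UNIV = (\<integral>\<^sup>+u. ennreal s * ennreal (beta_density \<alpha> c b u) \<partial>lborel)"
    unfolding H_def using s(1) assms(1) by (simp add: emeasure_density ennreal_mult beta_density_nonneg)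
  also have "\<dots> = ennreal s * emeasure (Beta_law \<alpha> c b) UNIV"
    by (simp add: nn_integral_cmult emeasure_Beta_law)
  also have "\<dots> = ennreal s"
    using prob_space.emeasure_space_1[OF prob_space_Beta_law[of \<alpha> c b]] assms by simp
  finally have "measure H UNIV = s" using s(1) by (simp add: measure_def)
  moreover have "tv_dist (Beta_law \<alpha> a b) (Beta_law \<alpha> c d) \<le> 1 - measure H UNIV"
  proof (rule tv_dist_le_common_part)
    show "emeasure H A \<le> emeasure (Beta_law \<alpha> a b) A" if "A \<in> sets borel" for A
      unfolding H_def using assms s that by (intro emeasure_scaled_Beta_law_le) auto
    show "emeasure H A \<le> emeasure (Beta_law \<alpha> c d) A" if "A \<in> sets borel" for A
      unfolding H_def using assms s that by (intro emeasure_scaled_Beta_law_le) auto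
  qed (use assms prob_space_Beta_law in \<open>auto simp: H_def\<close>)
  ultimately show ?thesis unfolding s_def by simp
qed

lemma one_minus_powr_le:
  fixes r p :: real
  assumes "0 < r" "r \<le> 1" "0 \<le> p"
  shows "1 - r powr p \<le> real (nat \<lceil>p\<rceil>) * (1 - r)"
proof -
  define n where "n = nat \<lceil>p\<rceil>"
  have "p \<le> real n" unfolding n_def by (rule real_nat_ceiling_ge)
  then have "r powr real n \<le> r powr p" using assms by (intro powr_mono') auto
  then have "r ^ n \<le> r powr p" using assms by (simp add: powr_realpow)
  moreover have "1 + real n * (r - 1) \<le> r ^ n"
    using Bernoulli_inequality[of "r-1" n] assms by simp
  ultimately show ?thesis unfolding n_def by (simp add: algebra_simps)
qed

definition relative_shift :: "real \<Rightarrow> real \<Rightarrow> real \<Rightarrow> real \<Rightarrow> real" where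
  "relative_shift a b c d = min ((((c+d) - (a+b))/2) / max (b-a) (d-c)) 1"

lemma tv_dist_Beta_law_le_shift:
  assumes "\<alpha> \<ge> 1" "a < b" "c < d" "a \<le> c" "b \<le> d"
  shows "tv_dist (Beta_law \<alpha> a b) (Beta_law \<alpha> c d)
           \<le> 2 * max 1 (real (nat \<lceil>2*\<alpha>-1\<rceil>)) * relative_shift a b c d"
proof -
  define q where "q = tv_dist (Beta_law \<alpha> a b) (Beta_law \<alpha> c d)"
  define L where "L = max (b-a) (d-c)"
  define t where "t = (((c+d) - (a+b))/2) / L"
  define n where "n = nat \<lceil>2*\<alpha>-1\<rceil>"
  define K where "K = 2 * max 1 (real n)"
  have L: "L > 0" using assms by (simp add: L_def)
  have t: "0 \<le> t" using assms L by (simp add: t_def)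
  have q1: "q \<le> 1"
    unfolding q_def using assms
    by (intro tv_dist_le abs_measure_diff_le_1 prob_space_Beta_law) auto
  have "q \<le> K * t"
  proof (cases "b \<le> c")
    case True
    then have "L \<le> (c+d) - (a+b)" using assms by (auto simp: L_def max_def)
    then have "1/2 \<le> t" using L by (simp add: t_def field_simps)
    moreover have "2 * t \<le> K * t" using t unfolding K_def by (intro mult_right_mono) auto
    ultimately show ?thesis using q1 by linarith
  next
    case False
    define r where "r = (b-c) / L"
    have r: "0 < r" "r \<le> 1" using False assms L by (auto simp: r_def L_def field_simps)
    have "1 - r = (L - (b-c)) / L" using L by (simp add: r_def diff_divide_distrib)
    also have "\<dots> \<le> ((c+d) - (a+b)) / L"
      using assms L by (intro divide_right_mono) (auto simp: L_def)
    also have "\<dots> = 2 * t" using L by (simp add: t_def field_simps)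
    finally have "1 - r \<le> 2 * t" .
    have "q \<le> 1 - r powr (2*\<alpha>-1)"
      unfolding q_def r_def L_def using False assms by (intro tv_dist_Beta_law_le_overlap) auto
    also have "\<dots> \<le> real n * (1 - r)"
      unfolding n_def using r assms by (intro one_minus_powr_le) auto
    also have "\<dots> \<le> real n * (2 * t)"
      using \<open>1 - r \<le> 2 * t\<close> by (intro mult_left_mono) auto
    also have "\<dots> \<le> K * t"
      using t by (simp add: K_def mult_right_mono)
    finally show ?thesis .
  qed
  then have "q \<le> K * min t 1"
    using q1 by (cases "t \<le> 1") (auto simp: min_def K_def)
  then show ?thesis unfolding q_def K_def n_def t_def L_def relative_shift_def .
qed

definition beta_floor :: "real \<Rightarrow> real" where
  "beta_floor \<alpha> = beta_const \<alpha> * (1/4) powr (2*\<alpha>-2)"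

lemma beta_floor_pos: "\<alpha> > 0 \<Longrightarrow> beta_floor \<alpha> > 0"
  unfolding beta_floor_def using beta_const_pos by simp

lemma beta_density_ge_floor:
  assumes "\<alpha> \<ge> 1" "a < b" "a + (b-a)/4 \<le> u" "u \<le> b - (b-a)/4"
  shows "beta_floor \<alpha> / (b-a) \<le> beta_density \<alpha> a b u"
proof -
  define t where "t = (u-a)/(b-a)"
  have t: "1/4 \<le> t" "1/4 \<le> 1-t" using assms by (simp_all add: t_def field_simps)
  have "(1/4) powr (2*\<alpha>-2) = (1/4) powr (\<alpha>-1) * (1/4::real) powr (\<alpha>-1)"
    by (simp add: powr_add[symmetric])
  also have "\<dots> \<le> t powr (\<alpha>-1) * (1-t) powr (\<alpha>-1)"
    using t assms by (intro mult_mono powr_mono2) auto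
  finally have "beta_floor \<alpha> \<le> beta_density \<alpha> 0 1 t"
    using t beta_const_pos[of \<alpha>] assms by (simp add: beta_floor_def beta_density_std)
  then show ?thesis
    using assms by (simp add: beta_density_affine[of a b] t_def divide_right_mono)
qed

lemma emeasure_density_ge_interval:
  assumes "f \<in> borel_measurable borel" "\<And>u. l < u \<Longrightarrow> u \<le> r \<Longrightarrow> k \<le> f u" "0 \<le> k" "l \<le> r"
  shows "ennreal (k * (r - l)) \<le> emeasure (density lborel (\<lambda>u. ennreal (f u))) {l<..r}"
proof -
  have "ennreal (k * (r - l)) = (\<integral>\<^sup>+u. ennreal k * indicator {l<..r} u \<partial>lborel)"
    using assms by (simp add: nn_integral_cmult_indicator ennreal_mult)
  also have "\<dots> \<le> (\<integral>\<^sup>+u. ennreal (f u) * indicator {l<..r} u \<partial>lborel)"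
    using assms by (intro nn_integral_mono) (auto simp: indicator_def intro: ennreal_leI)
  also have "\<dots> = emeasure (density lborel (\<lambda>u. ennreal (f u))) {l<..r}"
    using assms by (simp add: emeasure_density)
  finally show ?thesis .
qed

lemma tv_dist_Beta_law_ge_midpoint_gap:
  assumes "\<alpha> \<ge> 1" "a < b" "c < d" "a \<le> c" "b \<le> d"
  shows "beta_floor \<alpha> / (b-a) * (min ((c+d)/2) ((a+b)/2 + (b-a)/4) - (a+b)/2)
           \<le> tv_dist (Beta_law \<alpha> a b) (Beta_law \<alpha> c d)"
proof -
  define m where "m = (a+b)/2"
  define t where "t = (c+d)/2"
  define t' where "t' = min t (m + (b-a)/4)"
  define \<mu> where "\<mu> = Beta_law \<alpha> a b"
  interpret \<mu>: prob_space \<mu> unfolding \<mu>_def using assms by (intro prob_space_Beta_law) auto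
  have [simp]: "sets \<mu> = sets borel" by (simp add: \<mu>_def)
  have m: "m \<le> t'" using assms by (simp add: m_def t_def t'_def)
  have t': "t' \<le> t" unfolding t'_def by (rule min.cobounded1)
  have "ennreal (beta_floor \<alpha> / (b-a) * (t' - m)) \<le> emeasure \<mu> {m<..t'}"
    unfolding \<mu>_def Beta_law_def
    using assms beta_floor_pos[of \<alpha>] m
    by (intro emeasure_density_ge_interval beta_density_ge_floor)
       (auto simp: m_def t'_def field_simps)
  then have "beta_floor \<alpha> / (b-a) * (t' - m) \<le> measure \<mu> {m<..t'}"
    by (simp add: \<mu>.emeasure_eq_measure)
  also have "\<dots> \<le> measure \<mu> {m<..t}"
    using t' by (intro \<mu>.finite_measure_mono) auto
  also have "\<dots> = measure \<mu> {..t} - measure \<mu> {..m}"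
  proof -
    have "{..t} - {..m} = {m<..t}" by auto
    then show ?thesis using \<mu>.finite_measure_Diff[of "{..t}" "{..m}"] m t' unfolding \<mu>_def by simp
  qed
  also have "measure \<mu> {..m} = measure (Beta_law \<alpha> c d) {..t}"
    unfolding \<mu>_def m_def t_def using assms by (intro measure_Beta_law_below_midpoint) auto
  also have "measure \<mu> {..t} - measure (Beta_law \<alpha> c d) {..t} \<le> tv_dist \<mu> (Beta_law \<alpha> c d)"
    using abs_measure_diff_le_tv_dist[of \<mu> "Beta_law \<alpha> c d" "{..t}"] assms \<mu>.prob_space_axioms
      prob_space_Beta_law[of \<alpha> c d] by simp
  finally show ?thesis unfolding \<mu>_def m_def t_def t'_def .
qed

lemma tv_dist_Beta_law_ge_shift:
  assumes "\<alpha> \<ge> 1" "a < b" "c < d" "a \<le> c" "b \<le> d"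
  shows "beta_floor \<alpha> / 4 * relative_shift a b c d \<le> tv_dist (Beta_law \<alpha> a b) (Beta_law \<alpha> c d)"
proof -
  define m where "m = (a+b)/2"
  define t where "t = (c+d)/2"
  define t' where "t' = min t (m + (b-a)/4)"
  have gap: "beta_floor \<alpha> / (b-a) * (t' - m) \<le> tv_dist (Beta_law \<alpha> a b) (Beta_law \<alpha> c d)"
    unfolding m_def t_def t'_def by (rule tv_dist_Beta_law_ge_midpoint_gap[OF assms])
  have tm: "t - m = ((c+d) - (a+b))/2" by (simp add: t_def m_def field_simps)
  have x: "0 \<le> (t-m)/(b-a)" using assms by (simp add: tm)
  have "relative_shift a b c d \<le> min ((t-m)/(b-a)) 1"
    unfolding relative_shift_def tm using assms x[unfolded tm]
    by (intro min.mono divide_left_mono) auto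
  also have "\<dots> \<le> 4 * min ((t-m)/(b-a)) (1/4)"
  proof -
    have "min y 1 \<le> 4 * min y (1/4)" if "0 \<le> y" for y :: real
      using that by (auto simp: min_def)
    then show ?thesis using x .
  qed
  also have "\<dots> = 4 * ((t'-m)/(b-a))"
    using assms by (cases "t \<le> m + (b-a)/4") (simp_all add: t'_def min_def field_simps)
  finally have shift: "relative_shift a b c d / 4 \<le> (t' - m) / (b-a)" by (simp add: algebra_simps)
  have "beta_floor \<alpha> / 4 * relative_shift a b c d = beta_floor \<alpha> * (relative_shift a b c d / 4)"
    by simp
  also have "\<dots> \<le> beta_floor \<alpha> * ((t' - m) / (b-a))"
    using shift beta_floor_pos[of \<alpha>] assms by (intro mult_left_mono) auto
  also have "\<dots> = beta_floor \<alpha> / (b-a) * (t' - m)" by simp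
  also note gap
  finally show ?thesis .
qed

lemma tv_dist_Beta_law_two_sided:
  assumes "\<alpha> \<ge> 1"
  obtains C where "C > 0"
    and "\<And>a b c d. a < b \<Longrightarrow> c < d \<Longrightarrow> a \<le> c \<Longrightarrow> b \<le> d \<Longrightarrow>
           relative_shift a b c d / C \<le> tv_dist (Beta_law \<alpha> a b) (Beta_law \<alpha> c d)"
    and "\<And>a b c d. a < b \<Longrightarrow> c < d \<Longrightarrow> a \<le> c \<Longrightarrow> b \<le> d \<Longrightarrow>
           tv_dist (Beta_law \<alpha> a b) (Beta_law \<alpha> c d) \<le> C * relative_shift a b c d"
proof -
  define C where "C = max (2 * max 1 (real (nat \<lceil>2*\<alpha>-1\<rceil>))) (4 / beta_floor \<alpha>)"
  have floor: "beta_floor \<alpha> > 0" using beta_floor_pos assms by simp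
  have "C > 0" by (simp add: C_def)
  then show thesis
  proof (rule that)
    fix a b c d :: real assume hyps: "a < b" "c < d" "a \<le> c" "b \<le> d"
    have Q: "0 \<le> relative_shift a b c d" using hyps by (simp add: relative_shift_def)
    have "relative_shift a b c d / C \<le> relative_shift a b c d / (4 / beta_floor \<alpha>)"
      using Q floor by (intro divide_left_mono) (auto simp: C_def)
    also have "\<dots> \<le> tv_dist (Beta_law \<alpha> a b) (Beta_law \<alpha> c d)"
      using tv_dist_Beta_law_ge_shift[OF assms hyps] by (simp add: field_simps)
    finally show "relative_shift a b c d / C \<le> tv_dist (Beta_law \<alpha> a b) (Beta_law \<alpha> c d)" .
    have "tv_dist (Beta_law \<alpha> a b) (Beta_law \<alpha> c d) \<le> 2 * max 1 (real (nat \<lceil>2*\<alpha>-1\<rceil>)) * relative_shift a b c d"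
      by (rule tv_dist_Beta_law_le_shift[OF assms hyps])
    also have "\<dots> \<le> C * relative_shift a b c d"
      using Q by (intro mult_right_mono) (auto simp: C_def)
    finally show "tv_dist (Beta_law \<alpha> a b) (Beta_law \<alpha> c d) \<le> C * relative_shift a b c d" .
  qed
qed

lemma len_Icc: "len {l..u} = (if l \<le> u then u - l else 0)"
  unfolding len_def measure_def by (simp add: emeasure_lborel_Icc_eq)

lemma overlap_le_half_if_tv_dist_Beta_law_large:
  assumes "\<alpha> \<ge> 1" "a < b" "c < d" "a \<le> c" "b \<le> d"
    and large: "1 - (1/2) powr (2*\<alpha>-1) \<le> tv_dist (Beta_law \<alpha> a b) (Beta_law \<alpha> c d)"
  shows "2 * len ({a..b} \<inter> {c..d}) \<le> max (len {a..b}) (len {c..d})"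
proof -
  have overlap: "{a..b} \<inter> {c..d} = {c..b}" using assms by auto
  have L: "max (len {a..b}) (len {c..d}) = max (b-a) (d-c)" using assms by (simp add: len_Icc)
  show ?thesis
  proof (cases "c < b")
    case True
    have "(b-c) / max (b-a) (d-c) \<le> 1/2"
    proof (rule ccontr)
      assume "\<not> ?thesis"
      then have "(1/2) powr (2*\<alpha>-1) < ((b-c) / max (b-a) (d-c)) powr (2*\<alpha>-1)"
        using assms by (intro powr_less_mono2) auto
      then show False using tv_dist_Beta_law_le_overlap[OF assms(1-5) True] large by linarith
    qed
    then show ?thesis using assms True overlap L by (simp add: len_Icc field_simps)
  next
    case False
    then show ?thesis using assms overlap L by (simp add: len_Icc le_max_iff_disj)
  qed
qed

theorem lemma5p3:
  fixes \<alpha> :: real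
  assumes "\<alpha> \<ge> 1"
  shows
  "(\<exists>C>0. \<forall>N k (x::nat\<Rightarrow>real) (y::nat\<Rightarrow>real).
      N \<ge> 2 \<longrightarrow> 1 \<le> k \<longrightarrow> k \<le> N - 1 \<longrightarrow> Omega N x \<longrightarrow> Omega N y \<longrightarrow>
      (\<forall>i\<le>N. x i \<le> y i) \<longrightarrow> x (k+1) > x (k-1) \<longrightarrow> y (k+1) > y (k-1) \<longrightarrow>
      (let q = tv_dist (Beta_law \<alpha> (x (k-1)) (x (k+1))) (Beta_law \<alpha> (y (k-1)) (y (k+1)));
           dX = ((y (k-1) + y (k+1)) - (x (k-1) + x (k+1))) / 2;
           Q = min (dX / max (x (k+1) - x (k-1)) (y (k+1) - y (k-1))) 1
       in Q / C \<le> q \<and> q \<le> C * Q))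
   \<and>
   (\<exists>c1>0. \<forall>N k (x::nat\<Rightarrow>real) (y::nat\<Rightarrow>real).
      N \<ge> 2 \<longrightarrow> 1 \<le> k \<longrightarrow> k \<le> N - 1 \<longrightarrow> Omega N x \<longrightarrow> Omega N y \<longrightarrow>
      (\<forall>i\<le>N. x i \<le> y i) \<longrightarrow> x (k+1) > x (k-1) \<longrightarrow> y (k+1) > y (k-1) \<longrightarrow>
      tv_dist (Beta_law \<alpha> (x (k-1)) (x (k+1))) (Beta_law \<alpha> (y (k-1)) (y (k+1))) \<ge> 1 - c1 \<longrightarrow>
      max (len {x (k-1)..x (k+1)}) (len {y (k-1)..y (k+1)})
        \<ge> 2 * len ({x (k-1)..x (k+1)} \<inter> {y (k-1)..y (k+1)}))"
proof -
  obtain C where "C > 0"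
    and lower: "\<And>a b c d. a < b \<Longrightarrow> c < d \<Longrightarrow> a \<le> c \<Longrightarrow> b \<le> d \<Longrightarrow>
                  relative_shift a b c d / C \<le> tv_dist (Beta_law \<alpha> a b) (Beta_law \<alpha> c d)"
    and upper: "\<And>a b c d. a < b \<Longrightarrow> c < d \<Longrightarrow> a \<le> c \<Longrightarrow> b \<le> d \<Longrightarrow>
                  tv_dist (Beta_law \<alpha> a b) (Beta_law \<alpha> c d) \<le> C * relative_shift a b c d"
    using tv_dist_Beta_law_two_sided[OF assms] by blast
  have ordered: "x (k-1) \<le> y (k-1)" "x (k+1) \<le> y (k+1)"
    if "1 \<le> k" "k \<le> N - 1" "\<forall>i\<le>N. x i \<le> y i" for N k and x y :: "nat \<Rightarrow> real"
    using that by simp_all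
  show ?thesis
    unfolding Let_def relative_shift_def[symmetric]
    by (rule conjI[OF exI[of _ C] exI[of _ "(1/2) powr (2*\<alpha>-1)"]]; intro conjI allI impI)
       (simp_all add: \<open>C > 0\<close> lower upper ordered overlap_le_half_if_tv_dist_Beta_law_large[OF assms]
         del: Int_atLeastAtMost)
qed

end
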